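(* Let $N\ge 1$ and let $\{(X_t,Y_t)\}_{t\ge0}$ be the continuous-time Maki--Thompson (MT) rumor process on the state space $S'=\{(x,y)\in\mathbb{Z}^2: 0\le x\le N,\ 0\le y\le N+1-x\}$, with transient set $S=S'\setminus\Delta$ and absorbing set $\Delta=\{(x,0): 0\le x\le N-1\}$, and absorption time $\tau_\Delta=\inf\{t>0: Y_t=0\}$. Then the process has a unique quasi-stationary distribution on $S$, namely $\nu=\delta_{(0,1)}$, the point mass at $(0,1)$. Moreover, for every probability distribution $\mu$ on $S$, $$\lim_{t\to\infty} P_\mu(X_t=x,\,Y_t=y \mid \tau_\Delta>t)=\nu(x,y)\quad\text{for all }(x,y)\in S,$$ i.e. $\delta_{(0,1)}$ is the Yaglom limit (quasi-limiting distribution) for every initial distribution on $S$.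
   Context: MT model: population of size $N+1$; $X_t$, $Y_t$ are the numbers of ignorants and spreaders at time $t$ (stiflers $Z_t=N+1-X_t-Y_t$). It is the continuous-time Markov chain on $S'$ whose only transitions from a state $(X,Y)$ are $(X,Y)\to(X-1,Y+1)$ at rate $XY$ and $(X,Y)\to(X,Y-1)$ at rate $Y(N-X)$ (so the total rate out of $(X,Y)$ is $NY$). For a probability measure $\nu$ on $S$, $P_\nu$ denotes the law of the chain started with initial distribution $\nu$. A probability measure $\nu$ on $S$ is a quasi-stationary distribution (QSD) if $P_\nu(X_t\in A\mid \tau_\Delta>t)=\nu(A)$ for all $t\ge0$ and all $A\subset S$ (here $X_t$ stands for the state $(X_t,Y_t)$). *)

theory Defs
  imports "HOL-Analysis.Analysis" "HOL-Probability.Probability_Mass_Function"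
begin

type_synonym state = "nat \<times> nat"

definition MT_space :: "nat \<Rightarrow> state set" where
  "MT_space N = {(x, y). x \<le> N \<and> y \<le> N + 1 - x}"

text \<open>Absorbing set: states with no spreaders (Y = 0).\<close>
definition MT_absorbing :: "nat \<Rightarrow> state set" where
  "MT_absorbing N = {s \<in> MT_space N. snd s = 0}"

definition MT_transient :: "nat \<Rightarrow> state set" where
  "MT_transient N = MT_space N - MT_absorbing N"

definition MT_gen :: "nat \<Rightarrow> state \<Rightarrow> state \<Rightarrow> real" where
  "MT_gen N s s' = (case s of (x, y) \<Rightarrow>
      if s' = (x, y) then - (real N * real y)
      else if 1 \<le> x \<and> s' = (x - 1, y + 1) then real x * real y
      else if 1 \<le> y \<and> s' = (x, y - 1) then real y * (real N - real x)
      else 0)"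

fun MT_gen_pow :: "nat \<Rightarrow> nat \<Rightarrow> state \<Rightarrow> state \<Rightarrow> real" where
  "MT_gen_pow N 0 s s' = (if s = s' then 1 else 0)"
| "MT_gen_pow N (Suc n) s s' = (\<Sum>u\<in>MT_space N. MT_gen_pow N n s u * MT_gen N u s')"

definition MT_trans :: "nat \<Rightarrow> real \<Rightarrow> state \<Rightarrow> state \<Rightarrow> real" where
  "MT_trans N t s s' = (\<Sum>n. t ^ n / fact n * MT_gen_pow N n s s')"

definition MT_dist :: "nat \<Rightarrow> state pmf \<Rightarrow> real \<Rightarrow> state \<Rightarrow> real" where
  "MT_dist N \<mu> t s = (\<Sum>u\<in>MT_space N. pmf \<mu> u * MT_trans N t u s)"

text \<open>P_mu(tau_Delta > t) = P_mu(X_t in S), since Delta is absorbing.\<close>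
definition MT_surv :: "nat \<Rightarrow> state pmf \<Rightarrow> real \<Rightarrow> real" where
  "MT_surv N \<mu> t = (\<Sum>s\<in>MT_transient N. MT_dist N \<mu> t s)"

definition MT_cond :: "nat \<Rightarrow> state pmf \<Rightarrow> real \<Rightarrow> state set \<Rightarrow> real" where
  "MT_cond N \<mu> t A = (\<Sum>s\<in>A. MT_dist N \<mu> t s) / MT_surv N \<mu> t"

definition MT_QSD :: "nat \<Rightarrow> state pmf \<Rightarrow> bool" where
  "MT_QSD N \<nu> \<longleftrightarrow> set_pmf \<nu> \<subseteq> MT_transient N \<and>
     (\<forall>t\<ge>0. \<forall>A\<subseteq>MT_transient N. MT_cond N \<nu> t A = measure_pmf.prob \<nu> A)"

end

theory Submission
  imports Defs
begin

(* Every transition lowers the level 2x + y of a state by exactly one, so the generator restricted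
   to the transient states is triangular, with diagonal entries - N y. The slowest states are thus
   those with one spreader, (x, 1), which are left at rate N.

   A QSD is a left eigenvector of the generator on S. At a state of maximal level in its support
   nothing flows in, which identifies the eigenvalue as - N y; the equation at (0, 1) then forces
   the mass at (0, 2) to vanish, and since every transient state other than (0, 1) leads to (0, 2),
   zero mass propagates backwards to all of them.

   For the Yaglom limit, let h_s(t) = exp(N t) P(X_t = s) and let a be the largest number of
   ignorants charged by the initial law. Mass reaches (x, 1) from (x + 1, 1) through (x, 2), and
   each such passage integrates once more, so h_(0,1) grows at least like t^a. Comparing solutions
   of the linear equations h_s' = inflow - N (y - 1) h_s along decreasing level shows that every
   other transient state carries O(t^(a - 1/2)), so the conditioned law concentrates on (0, 1). *)

lemma ode_comparison:
  fixes f g f' g' :: "real \<Rightarrow> real"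
  assumes "T \<le> t"
    and f: "\<And>\<tau>. T \<le> \<tau> \<Longrightarrow> (f has_real_derivative f' \<tau>) (at \<tau>)"
    and g: "\<And>\<tau>. T \<le> \<tau> \<Longrightarrow> (g has_real_derivative g' \<tau>) (at \<tau>)"
    and le: "\<And>\<tau>. T \<le> \<tau> \<Longrightarrow> f' \<tau> + c * f \<tau> \<le> g' \<tau> + c * g \<tau>"
    and "f T \<le> g T"
  shows "f t \<le> g t"
proof -
  define \<phi> where "\<phi> \<tau> = exp (c * \<tau>) * (g \<tau> - f \<tau>)" for \<tau>
  have "\<phi> T \<le> \<phi> t"
  proof (rule DERIV_nonneg_imp_nondecreasing[OF \<open>T \<le> t\<close>])
    fix \<tau> assume "T \<le> \<tau>"
    have "(\<phi> has_real_derivative exp (c * \<tau>) * ((g' \<tau> + c * g \<tau>) - (f' \<tau> + c * f \<tau>))) (at \<tau>)"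
      unfolding \<phi>_def
      by (rule derivative_eq_intros refl f g \<open>T \<le> \<tau>\<close> | simp add: algebra_simps)+
    moreover have "0 \<le> exp (c * \<tau>) * ((g' \<tau> + c * g \<tau>) - (f' \<tau> + c * f \<tau>))"
      using le[OF \<open>T \<le> \<tau>\<close>] by simp
    ultimately show "\<exists>y. (\<phi> has_real_derivative y) (at \<tau>) \<and> 0 \<le> y" by blast
  qed
  moreover have "0 \<le> \<phi> T"
    unfolding \<phi>_def using \<open>f T \<le> g T\<close> by simp
  ultimately have "0 \<le> exp (c * t) * (g t - f t)"
    unfolding \<phi>_def by linarith
  then show ?thesis
    by (simp add: zero_le_mult_iff)
qed

lemma DERIV_unique_right:
  fixes f g :: "real \<Rightarrow> real"
  assumes "(f has_real_derivative D) (at x)" "(g has_real_derivative E) (at x)"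
    and "\<And>t. x \<le> t \<Longrightarrow> f t = g t"
  shows "D = E"
proof (rule has_field_derivative_unique)
  show "(f has_real_derivative D) (at x within {x..})"
    using assms(1) by (rule has_field_derivative_at_within)
  show "(f has_real_derivative E) (at x within {x..})"
    using has_field_derivative_at_within[OF assms(2)] zero_less_one
    by (rule has_field_derivative_transform_within) (auto simp: assms(3))
  show "at x within {x..} \<noteq> bot"
    by (simp add: at_within_Ici_at_right)
qed

lemma inflow_zero_imp_source_zero:
  fixes f :: "'a \<Rightarrow> real" and Q :: "'a \<Rightarrow> 'a \<Rightarrow> real"
  assumes "finite U" "w \<in> U" "w \<noteq> s" "0 < Q w s"
    and "\<And>v. v \<in> U \<Longrightarrow> 0 \<le> f v" "\<And>v. v \<in> U \<Longrightarrow> v \<noteq> s \<Longrightarrow> 0 \<le> Q v s"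
    and "f s = 0" "(\<Sum>v\<in>U. f v * Q v s) = 0"
  shows "f w = 0"
proof -
  have "0 \<le> f v * Q v s" if "v \<in> U" for v
    using assms(5-7) that by (cases "v = s") auto
  with assms(1,8) have "\<forall>v\<in>U. f v * Q v s = 0"
    by (simp add: sum_nonneg_eq_0_iff)
  then show ?thesis
    using assms(2,4) by auto
qed

lemma tendsto_share_of_dominant:
  fixes f :: "'i \<Rightarrow> 'a \<Rightarrow> real"
  assumes "finite I" "i0 \<in> I" "i \<in> I"
    and nonzero: "\<forall>\<^sub>F t in F. f i0 t \<noteq> 0"
    and negligible: "\<And>j. j \<in> I \<Longrightarrow> j \<noteq> i0 \<Longrightarrow> ((\<lambda>t. f j t / f i0 t) \<longlongrightarrow> 0) F"
  shows "((\<lambda>t. f i t / (\<Sum>j\<in>I. f j t)) \<longlongrightarrow> (if i = i0 then 1 else 0)) F"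
proof -
  have relative: "((\<lambda>t. f j t / f i0 t) \<longlongrightarrow> (if j = i0 then 1 else 0)) F" if "j \<in> I" for j
  proof (cases "j = i0")
    case True
    then show ?thesis
      using nonzero by (auto intro: tendsto_eventually elim: eventually_mono)
  qed (use negligible that in auto)
  have "((\<lambda>t. \<Sum>j\<in>I. f j t / f i0 t) \<longlongrightarrow> (\<Sum>j\<in>I. if j = i0 then 1 else 0)) F"
    by (intro tendsto_sum relative)
  then have "((\<lambda>t. (f i t / f i0 t) / (\<Sum>j\<in>I. f j t / f i0 t)) \<longlongrightarrow> (if i = i0 then 1 else 0) / 1) F"
    using assms(1,2) by (intro tendsto_divide relative assms(3)) (simp_all add: sum.delta')
  moreover have "\<forall>\<^sub>F t in F. (f i t / f i0 t) / (\<Sum>j\<in>I. f j t / f i0 t) = f i t / (\<Sum>j\<in>I. f j t)"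
    using nonzero
  proof eventually_elim
    case (elim t)
    then show ?case
      unfolding sum_divide_distrib[symmetric] by (cases "(\<Sum>j\<in>I. f j t) = 0") (simp_all add: field_simps)
  qed
  ultimately show ?thesis
    using Lim_transform_eventually by fastforce
qed

lemma exp_neg_le_half:
  fixes x :: real
  assumes "1 \<le> x"
  shows "exp (- x) \<le> 1 / 2"
proof -
  have "exp (- x) \<le> exp (- 1)"
    using assms by simp
  also have "\<dots> \<le> 1 / 2"
    using exp_ge_add_one_self[of 1] by (simp add: exp_minus field_simps)
  finally show ?thesis .
qed

lemma powr_le_shifted_power:
  fixes t T :: real
  assumes "0 \<le> T" "2 * T + 1 \<le> t"
  shows "(1 + t) powr real a \<le> 2 ^ a * (t - T) ^ a"
proof -
  have "(1 + t) powr real a = (1 + t) ^ a"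
    using assms by (simp add: powr_realpow)
  also have "\<dots> \<le> (2 * (t - T)) ^ a"
    using assms by (intro power_mono) auto
  finally show ?thesis
    by (simp only: power_mult_distrib)
qed

lemma powr_supersolution:
  fixes C c q r \<tau> :: real
  assumes "0 \<le> \<tau>" "0 \<le> C" "- 1 / 2 \<le> q" and "r = q + 1 \<and> c = 0 \<or> r = q \<and> 1 \<le> c"
  shows "C / 2 * (1 + \<tau>) powr q \<le> C * (r * (1 + \<tau>) powr (r - 1)) + c * (C * (1 + \<tau>) powr r)"
proof -
  define p where "p = (1 + \<tau>) powr (q - 1)"
  have "0 < p" "(1 + \<tau>) powr q = p * (1 + \<tau>)"
    unfolding p_def using assms(1) powr_add[of "1 + \<tau>" "q - 1" 1] by auto
  show ?thesis
    using assms(4)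
  proof
    assume rc: "r = q + 1 \<and> c = 0"
    have "C * (1 / 2) * (1 + \<tau>) powr q \<le> C * (q + 1) * (1 + \<tau>) powr q"
      using assms(2,3) by (intro mult_right_mono mult_left_mono) auto
    then show ?thesis
      using rc by simp
  next
    assume rc: "r = q \<and> 1 \<le> c"
    have "1 + \<tau> \<le> c * (1 + \<tau>)"
      using rc assms(1) mult_right_mono[of 1 c "1 + \<tau>"] by simp
    have "(1 + \<tau>) / 2 \<le> q + (1 + \<tau>)"
      using assms(1,3) by simp
    also have "\<dots> \<le> q + c * (1 + \<tau>)"
      using \<open>1 + \<tau> \<le> c * (1 + \<tau>)\<close> by (rule add_left_mono)
    finally have "(1 + \<tau>) / 2 \<le> q + c * (1 + \<tau>)" .
    then have "C * p * ((1 + \<tau>) / 2) \<le> C * p * (q + c * (1 + \<tau>))"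
      using \<open>0 < p\<close> assms(2) by (intro mult_left_mono) auto
    moreover have "(1 + \<tau>) powr (r - 1) = p" "(1 + \<tau>) powr r = p * (1 + \<tau>)"
      using rc \<open>(1 + \<tau>) powr q = p * (1 + \<tau>)\<close> by (simp_all add: p_def)
    ultimately show ?thesis
      unfolding \<open>(1 + \<tau>) powr q = p * (1 + \<tau>)\<close> using rc by (simp add: algebra_simps)
  qed
qed

lemma finite_uniform_bound:
  fixes f :: "'a \<Rightarrow> real \<Rightarrow> real"
  assumes "finite P" "\<And>t. 0 \<le> t \<Longrightarrow> 0 \<le> g t"
    and "\<And>p. p \<in> P \<Longrightarrow> \<exists>C\<ge>0. \<forall>t\<ge>0. f p t \<le> C * g t"
  obtains B where "0 \<le> B" "\<And>p t. p \<in> P \<Longrightarrow> 0 \<le> t \<Longrightarrow> f p t \<le> B * g t"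
proof -
  obtain Cp where Cp: "\<And>p. p \<in> P \<Longrightarrow> 0 \<le> Cp p" "\<And>p t. p \<in> P \<Longrightarrow> 0 \<le> t \<Longrightarrow> f p t \<le> Cp p * g t"
    using assms(3) by metis
  have "f p t \<le> (\<Sum>p\<in>P. Cp p) * g t" if "p \<in> P" "0 \<le> t" for p t
  proof -
    have "Cp p \<le> (\<Sum>p\<in>P. Cp p)"
      using that(1) Cp(1) assms(1) by (intro member_le_sum) auto
    then have "Cp p * g t \<le> (\<Sum>p\<in>P. Cp p) * g t"
      using assms(2)[OF that(2)] by (rule mult_right_mono)
    with Cp(2)[OF that] show ?thesis
      by linarith
  qed
  moreover have "0 \<le> (\<Sum>p\<in>P. Cp p)"
    using Cp(1) by (simp add: sum_nonneg)
  ultimately show ?thesis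
    using that by blast
qed

section \<open>The state space and the generator\<close>

lemma finite_MT_space: "finite (MT_space N)"
proof (rule finite_subset)
  show "MT_space N \<subseteq> {0..N} \<times> {0..N+1}" unfolding MT_space_def by auto
qed simp

lemma mem_MT_space_iff: "(x, y) \<in> MT_space N \<longleftrightarrow> x \<le> N \<and> x + y \<le> N + 1"
  unfolding MT_space_def by auto

lemma mem_MT_transient_iff: "(x, y) \<in> MT_transient N \<longleftrightarrow> x \<le> N \<and> 1 \<le> y \<and> x + y \<le> N + 1"
  unfolding MT_transient_def MT_absorbing_def MT_space_def by auto

lemma MT_transient_subset: "MT_transient N \<subseteq> MT_space N"
  unfolding MT_transient_def by auto

lemma finite_MT_transient: "finite (MT_transient N)"
  using finite_subset[OF MT_transient_subset finite_MT_space] .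

lemma zero_one_MT_transient: "1 \<le> N \<Longrightarrow> (0, 1) \<in> MT_transient N"
  by (simp add: mem_MT_transient_iff)

lemma abs_MT_gen_le:
  assumes "u \<in> MT_space N"
  shows "\<bar>MT_gen N u v\<bar> \<le> (real N + 1)^2"
proof -
  obtain x y where u: "u = (x, y)" by (cases u)
  have "real x \<le> real N + 1" "real y \<le> real N + 1" "real N - real x \<le> real N + 1" "real x \<le> real N"
    using assms unfolding u mem_MT_space_iff by linarith+
  then have "real N * real y \<le> (real N + 1)^2" "real x * real y \<le> (real N + 1)^2"
      "real y * (real N - real x) \<le> (real N + 1)^2"
    unfolding power2_eq_square by (auto intro!: mult_mono)
  moreover have "0 \<le> real y * (real N - real x)"
    using \<open>real x \<le> real N\<close> by simp
  ultimately show ?thesis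
    unfolding MT_gen_def u by auto
qed

lemma MT_gen_offdiag_nonneg:
  assumes "u \<in> MT_space N" "u \<noteq> v"
  shows "0 \<le> MT_gen N u v"
  using assms unfolding MT_gen_def MT_space_def by (auto split: prod.splits)

lemma MT_gen_eq_0_if_fst_less: "fst u < fst v \<Longrightarrow> MT_gen N u v = 0"
  unfolding MT_gen_def by (auto split: prod.splits)

definition MT_inflow :: "nat \<Rightarrow> (state \<Rightarrow> real) \<Rightarrow> nat \<Rightarrow> nat \<Rightarrow> real" where
  "MT_inflow N f x y =
     (if 2 \<le> y \<and> (x + 1, y - 1) \<in> MT_space N then real (x + 1) * real (y - 1) * f (x + 1, y - 1) else 0)
   + (if (x, y + 1) \<in> MT_space N then real (y + 1) * (real N - real x) * f (x, y + 1) else 0)"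

lemma MT_gen_col:
  "MT_gen N w (x, y) =
     (if w = (x, y) then - (real N * real y) else 0)
   + (if w = (x + 1, y - 1) \<and> 1 \<le> y then real (x + 1) * real (y - 1) else 0)
   + (if w = (x, y + 1) then real (y + 1) * (real N - real x) else 0)"
proof (cases w)
  case (Pair a b)
  show ?thesis unfolding Pair MT_gen_def
    by (cases "a = x + 1"; cases "b + 1 = y"; cases "b = y + 1"; cases "a = x"; auto)
qed

lemma sum_MT_gen_col:
  assumes "(x, y) \<in> MT_space N"
  shows "(\<Sum>w\<in>MT_space N. f w * MT_gen N w (x, y)) = MT_inflow N f x y - real N * real y * f (x, y)"
proof -
  have expand: "(\<Sum>w\<in>MT_space N. f w * MT_gen N w (x, y)) =
      (\<Sum>w\<in>MT_space N. if w = (x, y) then - (real N * real y) * f w else 0)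
    + (\<Sum>w\<in>MT_space N. if w = (x + 1, y - 1) \<and> 1 \<le> y then real (x + 1) * real (y - 1) * f w else 0)
    + (\<Sum>w\<in>MT_space N. if w = (x, y + 1) then real (y + 1) * (real N - real x) * f w else 0)"
    unfolding MT_gen_col sum.distrib[symmetric] by (intro sum.cong refl) (simp add: distrib_left mult.commute)
  have "(\<Sum>w\<in>MT_space N. if w = (x + 1, y - 1) \<and> 1 \<le> y then real (x + 1) * real (y - 1) * f w else 0)
      = (if 2 \<le> y \<and> (x + 1, y - 1) \<in> MT_space N then real (x + 1) * real (y - 1) * f (x + 1, y - 1) else 0)"
    using finite_MT_space[of N] by (cases "1 \<le> y"; cases "y = 1") (simp_all add: sum.delta')
  moreover have "(\<Sum>w\<in>MT_space N. if w = (x, y) then - (real N * real y) * f w else 0)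
      = - (real N * real y) * f (x, y)"
    using assms finite_MT_space[of N] by (simp add: sum.delta')
  moreover have "(\<Sum>w\<in>MT_space N. if w = (x, y + 1) then real (y + 1) * (real N - real x) * f w else 0)
      = (if (x, y + 1) \<in> MT_space N then real (y + 1) * (real N - real x) * f (x, y + 1) else 0)"
    using finite_MT_space[of N] by (simp add: sum.delta')
  ultimately show ?thesis
    unfolding expand MT_inflow_def by simp
qed

definition MT_level :: "state \<Rightarrow> nat" where
  "MT_level s = 2 * fst s + snd s"

lemma MT_level_induct [consumes 1, case_names step]:
  assumes "s \<in> MT_space N"
    and step: "\<And>s. s \<in> MT_space N \<Longrightarrow>
      (\<And>s'. s' \<in> MT_space N \<Longrightarrow> MT_level s < MT_level s' \<Longrightarrow> P s') \<Longrightarrow> P s"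
  shows "P s"
  using assms(1)
proof (induction "2 * N + 2 - MT_level s" arbitrary: s rule: less_induct)
  case less
  show ?case
  proof (rule step[OF less.prems])
    fix s' assume s': "s' \<in> MT_space N" "MT_level s < MT_level s'"
    moreover have "MT_level s' \<le> 2 * N + 1"
      using s'(1) unfolding MT_level_def MT_space_def by auto
    ultimately show "P s'"
      by (intro less.hyps) auto
  qed
qed

lemma MT_inflow_nonneg:
  assumes "(x, y) \<in> MT_space N"
    and "\<And>s. s \<in> MT_space N \<Longrightarrow> MT_level (x, y) < MT_level s \<Longrightarrow> 0 \<le> f s"
  shows "0 \<le> MT_inflow N f x y"
  using assms unfolding MT_inflow_def by (auto simp: MT_level_def mem_MT_space_iff)

lemma MT_inflow_le:
  assumes "(x, y) \<in> MT_space N" "0 \<le> B"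
    and "2 \<le> y \<Longrightarrow> (x + 1, y - 1) \<in> MT_space N \<Longrightarrow> f (x + 1, y - 1) \<le> B"
    and "(x, y + 1) \<in> MT_space N \<Longrightarrow> f (x, y + 1) \<le> B"
  shows "MT_inflow N f x y \<le> 2 * (real N + 2)^2 * B"
proof -
  have coeff: "real (x + 1) * real (y - 1) \<le> (real N + 2)^2" "0 \<le> real (y + 1) * (real N - real x)"
      "real (y + 1) * (real N - real x) \<le> (real N + 2)^2"
    using assms(1) unfolding mem_MT_space_iff power2_eq_square by (auto intro!: mult_mono)
  have "(if 2 \<le> y \<and> (x + 1, y - 1) \<in> MT_space N then real (x + 1) * real (y - 1) * f (x + 1, y - 1) else 0)
      \<le> (real N + 2)^2 * B"
  proof (cases "2 \<le> y \<and> (x + 1, y - 1) \<in> MT_space N")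
    case True
    then have "real (x + 1) * real (y - 1) * f (x + 1, y - 1) \<le> real (x + 1) * real (y - 1) * B"
      by (intro mult_left_mono assms(3)) auto
    also have "\<dots> \<le> (real N + 2)^2 * B"
      using coeff(1) assms(2) by (rule mult_right_mono)
    finally show ?thesis
      using True by simp
  qed (use assms(2) in auto)
  moreover have "(if (x, y + 1) \<in> MT_space N then real (y + 1) * (real N - real x) * f (x, y + 1) else 0)
      \<le> (real N + 2)^2 * B"
  proof (cases "(x, y + 1) \<in> MT_space N")
    case True
    then have "real (y + 1) * (real N - real x) * f (x, y + 1) \<le> real (y + 1) * (real N - real x) * B"
      using coeff(2) by (intro mult_left_mono assms(4))
    also have "\<dots> \<le> (real N + 2)^2 * B"
      using coeff(3) assms(2) by (rule mult_right_mono)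
    finally show ?thesis
      using True by simp
  qed (use assms(2) in auto)
  ultimately show ?thesis
    unfolding MT_inflow_def by linarith
qed

section \<open>The transition function\<close>

lemma abs_MT_gen_pow_le: "\<bar>MT_gen_pow N n s s'\<bar> \<le> (card (MT_space N) * (real N + 1)^2) ^ n"
proof (induction n arbitrary: s')
  case (Suc n)
  have "\<bar>MT_gen_pow N (Suc n) s s'\<bar> \<le> (\<Sum>u\<in>MT_space N. \<bar>MT_gen_pow N n s u\<bar> * \<bar>MT_gen N u s'\<bar>)"
    unfolding MT_gen_pow.simps abs_mult[symmetric] by (rule sum_abs)
  also have "\<dots> \<le> (\<Sum>u\<in>MT_space N. (card (MT_space N) * (real N + 1)^2) ^ n * (real N + 1)^2)"
    using Suc abs_MT_gen_le by (intro sum_mono mult_mono) auto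
  finally show ?case by (simp add: mult_ac)
qed simp

definition MT_trans_coeff :: "nat \<Rightarrow> state \<Rightarrow> state \<Rightarrow> nat \<Rightarrow> real" where
  "MT_trans_coeff N s s' n = MT_gen_pow N n s s' / fact n"

lemma MT_trans_powser: "MT_trans N t s s' = (\<Sum>n. MT_trans_coeff N s s' n * t ^ n)"
  unfolding MT_trans_def MT_trans_coeff_def by (simp add: field_simps)

lemma summable_MT_trans_coeff: "summable (\<lambda>n. MT_trans_coeff N s s' n * t ^ n)"
proof (rule summable_comparison_test)
  define K where "K = card (MT_space N) * (real N + 1)^2"
  show "summable (\<lambda>n. inverse (fact n) * (K * \<bar>t\<bar>) ^ n)"
    by (rule summable_exp)
  have "norm (MT_trans_coeff N s s' n * t ^ n) \<le> inverse (fact n) * (K * \<bar>t\<bar>) ^ n" for n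
  proof -
    have "norm (MT_trans_coeff N s s' n * t ^ n) = inverse (fact n) * (\<bar>MT_gen_pow N n s s'\<bar> * \<bar>t\<bar> ^ n)"
      by (simp add: MT_trans_coeff_def abs_mult power_abs divide_inverse)
    also have "\<dots> \<le> inverse (fact n) * (K ^ n * \<bar>t\<bar> ^ n)"
      unfolding K_def by (intro mult_left_mono mult_right_mono abs_MT_gen_pow_le) auto
    finally show ?thesis by (simp add: power_mult_distrib)
  qed
  then show "\<exists>M. \<forall>n\<ge>M. norm (MT_trans_coeff N s s' n * t ^ n) \<le> inverse (fact n) * (K * \<bar>t\<bar>) ^ n"
    by blast
qed

lemma diffs_MT_trans_coeff:
  "diffs (MT_trans_coeff N s s') n = (\<Sum>u\<in>MT_space N. MT_trans_coeff N s u n * MT_gen N u s')"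
  unfolding diffs_def MT_trans_coeff_def
  by (simp add: sum_divide_distrib[symmetric] field_simps del: of_nat_Suc)

lemma MT_trans_forward_equation:
  "((\<lambda>t. MT_trans N t s s') has_real_derivative
      (\<Sum>u\<in>MT_space N. MT_trans N t s u * MT_gen N u s')) (at t)"
proof -
  have "(\<Sum>n. diffs (MT_trans_coeff N s s') n * t ^ n)
      = (\<Sum>n. \<Sum>u\<in>MT_space N. MT_trans_coeff N s u n * t ^ n * MT_gen N u s')"
    unfolding diffs_MT_trans_coeff sum_distrib_right by (simp add: mult_ac)
  also have "\<dots> = (\<Sum>u\<in>MT_space N. \<Sum>n. MT_trans_coeff N s u n * t ^ n * MT_gen N u s')"
    by (intro suminf_sum summable_mult2 summable_MT_trans_coeff)
  also have "\<dots> = (\<Sum>u\<in>MT_space N. MT_trans N t s u * MT_gen N u s')"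
    unfolding MT_trans_powser by (intro sum.cong refl suminf_mult2[symmetric] summable_MT_trans_coeff)
  finally show ?thesis
    unfolding MT_trans_powser
    using termdiffs_strong_converges_everywhere[OF summable_MT_trans_coeff] by metis
qed

lemma MT_trans_0: "MT_trans N 0 s s' = (if s = s' then 1 else 0)"
  unfolding MT_trans_powser powser_zero by (simp add: MT_trans_coeff_def)

lemma MT_dist_deriv:
  "((\<lambda>t. MT_dist N \<mu> t s) has_real_derivative
      (\<Sum>w\<in>MT_space N. MT_dist N \<mu> t w * MT_gen N w s)) (at t)"
proof -
  have "(\<Sum>u\<in>MT_space N. pmf \<mu> u * (\<Sum>w\<in>MT_space N. MT_trans N t u w * MT_gen N w s))
      = (\<Sum>w\<in>MT_space N. MT_dist N \<mu> t w * MT_gen N w s)"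
    unfolding MT_dist_def sum_distrib_left sum_distrib_right
    by (subst sum.swap) (simp add: mult_ac)
  moreover have "((\<lambda>t. MT_dist N \<mu> t s) has_real_derivative
      (\<Sum>u\<in>MT_space N. pmf \<mu> u * (\<Sum>w\<in>MT_space N. MT_trans N t u w * MT_gen N w s))) (at t)"
    unfolding MT_dist_def by (intro DERIV_sum DERIV_cmult MT_trans_forward_equation)
  ultimately show ?thesis by simp
qed

lemma MT_dist_0: "s \<in> MT_space N \<Longrightarrow> MT_dist N \<mu> 0 s = pmf \<mu> s"
  unfolding MT_dist_def MT_trans_0 by (simp add: finite_MT_space if_distrib cong: if_cong)

lemma MT_gen_pow_eq_0_if_fst_less: "fst u < fst s \<Longrightarrow> MT_gen_pow N n u s = 0"
proof (induction n arbitrary: s)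
  case (Suc n)
  have "MT_gen_pow N n u w * MT_gen N w s = 0" for w
    using Suc.IH[of w] MT_gen_eq_0_if_fst_less[of w s N] Suc.prems by (cases "fst u < fst w") auto
  then show ?case
    unfolding MT_gen_pow.simps by (intro sum.neutral) blast
qed auto

lemma MT_dist_eq_0_if_fst_less:
  assumes "\<And>u. u \<in> set_pmf \<mu> \<Longrightarrow> fst u < fst s"
  shows "MT_dist N \<mu> t s = 0"
proof -
  have "pmf \<mu> u * MT_trans N t u s = 0" for u
    using assms[of u] MT_gen_pow_eq_0_if_fst_less[of u s N]
    by (cases "u \<in> set_pmf \<mu>") (auto simp: MT_trans_def set_pmf_iff)
  then show ?thesis
    unfolding MT_dist_def by (intro sum.neutral) blast
qed

definition MT_scaled :: "nat \<Rightarrow> state pmf \<Rightarrow> real \<Rightarrow> state \<Rightarrow> real" where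
  "MT_scaled N \<mu> t s = exp (real N * t) * MT_dist N \<mu> t s"

lemma MT_scaled_deriv:
  assumes "(x, y) \<in> MT_space N"
  shows "((\<lambda>t. MT_scaled N \<mu> t (x, y)) has_real_derivative
      MT_inflow N (MT_scaled N \<mu> t) x y - real N * (real y - 1) * MT_scaled N \<mu> t (x, y)) (at t)"
proof -
  have "MT_inflow N (MT_scaled N \<mu> t) x y = exp (real N * t) * MT_inflow N (MT_dist N \<mu> t) x y"
    unfolding MT_inflow_def MT_scaled_def by (simp add: algebra_simps)
  then have "exp (real N * t) * real N * MT_dist N \<mu> t (x, y)
      + exp (real N * t) * (\<Sum>w\<in>MT_space N. MT_dist N \<mu> t w * MT_gen N w (x, y))
    = MT_inflow N (MT_scaled N \<mu> t) x y - real N * (real y - 1) * MT_scaled N \<mu> t (x, y)"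
    unfolding sum_MT_gen_col[OF assms] MT_scaled_def by (simp add: algebra_simps)
  moreover have "((\<lambda>t. MT_scaled N \<mu> t (x, y)) has_real_derivative
      exp (real N * t) * real N * MT_dist N \<mu> t (x, y)
      + exp (real N * t) * (\<Sum>w\<in>MT_space N. MT_dist N \<mu> t w * MT_gen N w (x, y))) (at t)"
    unfolding MT_scaled_def by (auto intro!: derivative_eq_intros MT_dist_deriv)
  ultimately show ?thesis by simp
qed

lemma MT_scaled_0: "s \<in> MT_space N \<Longrightarrow> MT_scaled N \<mu> 0 s = pmf \<mu> s"
  unfolding MT_scaled_def by (simp add: MT_dist_0)

lemma MT_scaled_ge_if_subsolution:
  assumes "(x, y) \<in> MT_space N" "T \<le> t"
    and "\<And>\<tau>. T \<le> \<tau> \<Longrightarrow> (g has_real_derivative g' \<tau>) (at \<tau>)"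
    and "\<And>\<tau>. T \<le> \<tau> \<Longrightarrow> g' \<tau> + real N * (real y - 1) * g \<tau> \<le> MT_inflow N (MT_scaled N \<mu> \<tau>) x y"
    and "g T \<le> MT_scaled N \<mu> T (x, y)"
  shows "g t \<le> MT_scaled N \<mu> t (x, y)"
  by (rule ode_comparison[where c = "real N * (real y - 1)" and f' = g'
        and g' = "\<lambda>\<tau>. MT_inflow N (MT_scaled N \<mu> \<tau>) x y - real N * (real y - 1) * MT_scaled N \<mu> \<tau> (x, y)"])
     (use assms MT_scaled_deriv[OF assms(1)] in auto)

lemma MT_scaled_le_if_supersolution:
  assumes "(x, y) \<in> MT_space N" "T \<le> t"
    and "\<And>\<tau>. T \<le> \<tau> \<Longrightarrow> (g has_real_derivative g' \<tau>) (at \<tau>)"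
    and "\<And>\<tau>. T \<le> \<tau> \<Longrightarrow> MT_inflow N (MT_scaled N \<mu> \<tau>) x y \<le> g' \<tau> + real N * (real y - 1) * g \<tau>"
    and "MT_scaled N \<mu> T (x, y) \<le> g T"
  shows "MT_scaled N \<mu> t (x, y) \<le> g t"
  by (rule ode_comparison[where c = "real N * (real y - 1)" and g' = g'
        and f' = "\<lambda>\<tau>. MT_inflow N (MT_scaled N \<mu> \<tau>) x y - real N * (real y - 1) * MT_scaled N \<mu> \<tau> (x, y)"])
     (use assms MT_scaled_deriv[OF assms(1)] in auto)

lemma MT_scaled_nonneg:
  assumes "s \<in> MT_space N" "0 \<le> t"
  shows "0 \<le> MT_scaled N \<mu> t s"
  using assms
proof (induction arbitrary: t rule: MT_level_induct)
  case (step s)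
  obtain x y where s: "s = (x, y)" by (cases s)
  show ?case
    unfolding s
  proof (rule MT_scaled_ge_if_subsolution[where g = "\<lambda>_. 0" and g' = "\<lambda>_. 0" and T = 0])
    fix \<tau> :: real assume "0 \<le> \<tau>"
    then have "0 \<le> MT_inflow N (MT_scaled N \<mu> \<tau>) x y"
      using step unfolding s by (intro MT_inflow_nonneg) auto
    then show "0 + real N * (real y - 1) * 0 \<le> MT_inflow N (MT_scaled N \<mu> \<tau>) x y"
      by simp
  qed (use step s in \<open>auto simp: MT_scaled_0\<close>)
qed

lemma MT_dist_nonneg: "s \<in> MT_space N \<Longrightarrow> 0 \<le> t \<Longrightarrow> 0 \<le> MT_dist N \<mu> t s"
  using MT_scaled_nonneg[of s N t \<mu>] by (simp add: MT_scaled_def zero_le_mult_iff)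

section \<open>Quasi-stationary distributions\<close>

lemma MT_gen_pow_from_zero_one:
  assumes "s \<in> MT_space N" "s \<noteq> (0, 0)"
  shows "MT_gen_pow N n (0, 1) s = (if s = (0, 1) then (- real N) ^ n else 0)"
  using assms
proof (induction n arbitrary: s)
  case (Suc n)
  have "MT_gen_pow N n (0, 1) u * MT_gen N u s
      = (if u = (0, 1) then (- real N) ^ n * MT_gen N (0, 1) s else 0)" if "u \<in> MT_space N" for u
  proof (cases "u = (0, 0)")
    case True
    then show ?thesis using Suc.prems unfolding MT_gen_def by auto
  qed (use Suc.IH that in auto)
  then have "MT_gen_pow N (Suc n) (0, 1) s = (- real N) ^ n * MT_gen N (0, 1) s"
    using finite_MT_space[of N] by (simp add: sum.delta' mem_MT_space_iff cong: sum.cong)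
  then show ?case
    using Suc.prems unfolding MT_gen_def by (auto split: prod.splits)
qed simp

lemma MT_trans_from_zero_one:
  assumes "s \<in> MT_space N" "s \<noteq> (0, 0)"
  shows "MT_trans N t (0, 1) s = (if s = (0, 1) then exp (- (real N * t)) else 0)"
proof -
  have "t ^ n / fact n * (- real N) ^ n = (- (real N * t)) ^ n /\<^sub>R fact n" for n
    by (simp add: power_mult_distrib[symmetric] field_simps)
  then show ?thesis
    unfolding MT_trans_def MT_gen_pow_from_zero_one[OF assms] by (simp add: exp_def)
qed

lemma MT_dist_from_zero_one:
  assumes "1 \<le> N" "s \<in> MT_transient N"
  shows "MT_dist N (return_pmf (0, 1)) t s = (if s = (0, 1) then exp (- (real N * t)) else 0)"
proof -
  have "(0, 1) \<in> MT_space N" "s \<in> MT_space N" "s \<noteq> (0, 0)"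
    using assms MT_transient_subset[of N] by (auto simp: mem_MT_transient_iff mem_MT_space_iff)
  then have "MT_dist N (return_pmf (0, 1)) t s = MT_trans N t (0, 1) s"
    unfolding MT_dist_def using finite_MT_space[of N] by (simp add: indicator_def sum.delta)
  then show ?thesis
    using MT_trans_from_zero_one[OF \<open>s \<in> MT_space N\<close> \<open>s \<noteq> (0, 0)\<close>] by simp
qed

lemma MT_QSD_return_zero_one:
  assumes "1 \<le> N"
  shows "MT_QSD N (return_pmf (0, 1))"
  unfolding MT_QSD_def
proof (intro conjI allI impI)
  show "set_pmf (return_pmf (0, 1)) \<subseteq> MT_transient N"
    using zero_one_MT_transient[OF assms] by simp
  fix t :: real and A assume A: "A \<subseteq> MT_transient N"
  have sum_eq: "(\<Sum>s\<in>B. MT_dist N (return_pmf (0, 1)) t s)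
      = (if (0, 1) \<in> B then exp (- (real N * t)) else 0)" if "B \<subseteq> MT_transient N" for B
  proof -
    have "finite B"
      using that finite_MT_transient finite_subset by blast
    have "(\<Sum>s\<in>B. MT_dist N (return_pmf (0, 1)) t s)
        = (\<Sum>s\<in>B. if s = (0, 1) then exp (- (real N * t)) else 0)"
      by (intro sum.cong refl MT_dist_from_zero_one[OF assms]) (use that in blast)
    then show ?thesis
      using \<open>finite B\<close> by (simp add: sum.delta)
  qed
  have "MT_surv N (return_pmf (0, 1)) t = exp (- (real N * t))"
    unfolding MT_surv_def using sum_eq[OF order_refl] zero_one_MT_transient[OF assms] by simp
  moreover note sum_eq[OF A]
  ultimately show "MT_cond N (return_pmf (0, 1)) t A = measure_pmf.prob (return_pmf (0, 1)) A"
    unfolding MT_cond_def by (simp add: measure_return_pmf)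
qed

lemma MT_QSD_eigen:
  assumes "MT_QSD N \<nu>"
  obtains \<theta> where "\<And>s. s \<in> MT_transient N \<Longrightarrow>
    (\<Sum>w\<in>MT_space N. pmf \<nu> w * MT_gen N w s) = \<theta> * pmf \<nu> s"
proof -
  have supp: "set_pmf \<nu> \<subseteq> MT_transient N"
    and qsd: "\<And>t A. 0 \<le> t \<Longrightarrow> A \<subseteq> MT_transient N \<Longrightarrow> MT_cond N \<nu> t A = measure_pmf.prob \<nu> A"
    using assms unfolding MT_QSD_def by blast+
  have "measure_pmf.prob \<nu> (MT_transient N) = 1"
    using supp by (auto simp: measure_pmf.prob_eq_1 AE_measure_pmf_iff)
  then have surv_nonzero: "MT_surv N \<nu> t \<noteq> 0" if "0 \<le> t" for t
    using qsd[OF that order_refl] unfolding MT_cond_def by auto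
  have dist_eq: "MT_dist N \<nu> t s = pmf \<nu> s * MT_surv N \<nu> t"
    if "0 \<le> t" "s \<in> MT_transient N" for t s
    using qsd[OF that(1), of "{s}"] that(2) surv_nonzero[OF that(1)] unfolding MT_cond_def
    by (simp add: measure_pmf_single field_simps)
  \<comment> \<open>Differentiate \<open>P\<^sub>\<nu>(X\<^sub>t = s) = \<nu>(s) P\<^sub>\<nu>(\<tau>\<^sub>\<Delta> > t)\<close> at \<open>t = 0\<close> from the right.\<close>
  define \<theta> where "\<theta> = (\<Sum>s'\<in>MT_transient N. \<Sum>w\<in>MT_space N. pmf \<nu> w * MT_gen N w s')"
  have "(\<Sum>w\<in>MT_space N. pmf \<nu> w * MT_gen N w s) = \<theta> * pmf \<nu> s"
    if s: "s \<in> MT_transient N" for s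
  proof (rule DERIV_unique_right)
    show "((\<lambda>t. MT_dist N \<nu> t s) has_real_derivative (\<Sum>w\<in>MT_space N. pmf \<nu> w * MT_gen N w s)) (at 0)"
      using MT_dist_deriv[of N \<nu> s 0] by (simp add: MT_dist_0 cong: sum.cong)
    have "((\<lambda>t. MT_surv N \<nu> t) has_real_derivative
        (\<Sum>s'\<in>MT_transient N. \<Sum>w\<in>MT_space N. MT_dist N \<nu> 0 w * MT_gen N w s')) (at 0)"
      unfolding MT_surv_def[abs_def] by (intro DERIV_sum MT_dist_deriv)
    then have "((\<lambda>t. MT_surv N \<nu> t) has_real_derivative \<theta>) (at 0)"
      unfolding \<theta>_def by (simp add: MT_dist_0 cong: sum.cong)
    then show "((\<lambda>t. pmf \<nu> s * MT_surv N \<nu> t) has_real_derivative \<theta> * pmf \<nu> s) (at 0)"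
      using DERIV_cmult by (metis mult.commute)
  qed (use dist_eq s in auto)
  then show ?thesis using that by blast
qed

definition MT_step :: "nat \<Rightarrow> state \<Rightarrow> state \<Rightarrow> bool" where
  "MT_step N w s \<longleftrightarrow> w \<in> MT_transient N \<and> s \<in> MT_transient N \<and> w \<noteq> s \<and> 0 < MT_gen N w s"

lemma MT_step_zero_backward:
  assumes "MT_step N w s" "\<And>v. v \<in> MT_space N \<Longrightarrow> 0 \<le> f v"
    and "f s = 0" "(\<Sum>v\<in>MT_space N. f v * MT_gen N v s) = 0"
  shows "f w = 0"
proof (rule inflow_zero_imp_source_zero[where Q = "MT_gen N" and U = "MT_space N"])
  show "w \<in> MT_space N" "w \<noteq> s" "0 < MT_gen N w s"
    using assms(1) MT_transient_subset unfolding MT_step_def by auto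
  show "0 \<le> MT_gen N v s" if "v \<in> MT_space N" "v \<noteq> s" for v
    using that by (rule MT_gen_offdiag_nonneg)
qed (use assms(2-) finite_MT_space in auto)

lemma MT_reaches_fewer_spreaders:
  assumes "(x, y) \<in> MT_transient N" "x < N" "1 \<le> j" "j \<le> y"
  shows "(MT_step N)\<^sup>*\<^sup>* (x, y) (x, j)"
  using assms(1,4)
proof (induction y)
  case (Suc y)
  show ?case
  proof (cases "j = Suc y")
    case False
    then have "MT_step N (x, Suc y) (x, y)" "(x, y) \<in> MT_transient N"
      using Suc.prems assms(2,3) by (auto simp: MT_step_def MT_gen_def mem_MT_transient_iff)
    with False Suc show ?thesis
      by (auto intro: converse_rtranclp_into_rtranclp)
  qed simp
qed simp

lemma MT_reaches_no_ignorants: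
  assumes "(x, y) \<in> MT_transient N"
  shows "(MT_step N)\<^sup>*\<^sup>* (x, y) (0, x + y)"
  using assms
proof (induction x arbitrary: y)
  case (Suc x)
  then have "MT_step N (Suc x, y) (x, y + 1)" "(x, y + 1) \<in> MT_transient N"
    by (auto simp: MT_step_def MT_gen_def mem_MT_transient_iff)
  moreover from this(2) have "(MT_step N)\<^sup>*\<^sup>* (x, y + 1) (0, x + (y + 1))"
    by (rule Suc.IH)
  ultimately show ?case
    by (auto intro: converse_rtranclp_into_rtranclp)
qed simp

lemma MT_eigen_zero_at_zero_two:
  assumes N: "1 \<le> N" and supp: "set_pmf \<nu> \<subseteq> MT_transient N"
    and eigen: "\<And>s. s \<in> MT_transient N \<Longrightarrow>
      (\<Sum>w\<in>MT_space N. pmf \<nu> w * MT_gen N w s) = \<theta> * pmf \<nu> s"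
  shows "pmf \<nu> (0, 2) = 0"
proof -
  have eigen_xy: "MT_inflow N (pmf \<nu>) x y - real N * real y * pmf \<nu> (x, y) = \<theta> * pmf \<nu> (x, y)"
    if "(x, y) \<in> MT_transient N" for x y
    using eigen[OF that] sum_MT_gen_col[of x y N "pmf \<nu>"] that MT_transient_subset[of N] by auto
  obtain xm ym where max: "(xm, ym) \<in> set_pmf \<nu>"
      "\<And>s. s \<in> set_pmf \<nu> \<Longrightarrow> MT_level s \<le> MT_level (xm, ym)"
  proof -
    obtain s0 where "s0 \<in> set_pmf \<nu>"
      using set_pmf_not_empty[of \<nu>] by blast
    moreover have "\<forall>s. s \<in> set_pmf \<nu> \<longrightarrow> MT_level s < 2 * N + 2"
      using supp by (auto simp: MT_level_def mem_MT_transient_iff dest!: subsetD)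
    ultimately obtain sm where "sm \<in> set_pmf \<nu>" "\<forall>s. s \<in> set_pmf \<nu> \<longrightarrow> MT_level s \<le> MT_level sm"
      using ex_has_greatest_nat[where f = MT_level and P = "\<lambda>s. s \<in> set_pmf \<nu>"] by blast
    then show ?thesis
      using that by (cases sm) auto
  qed
  \<comment> \<open>Nothing flows into a state of maximal level, so \<open>\<theta>\<close> is its diagonal entry \<open>- N ym\<close>.\<close>
  have "pmf \<nu> (xm, ym + 1) = 0" "2 \<le> ym \<Longrightarrow> pmf \<nu> (xm + 1, ym - 1) = 0"
    using max(2)[of "(xm + 1, ym - 1)"] max(2)[of "(xm, ym + 1)"]
    by (auto simp: MT_level_def set_pmf_iff)
  then have "MT_inflow N (pmf \<nu>) xm ym = 0"
    by (simp add: MT_inflow_def)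
  moreover have "0 < pmf \<nu> (xm, ym)" "(xm, ym) \<in> MT_transient N"
    using max(1) supp by (auto simp: pmf_positive)
  ultimately have "(\<theta> + real N * real ym) * pmf \<nu> (xm, ym) = 0" and "1 \<le> ym"
    using eigen_xy[of xm ym] by (auto simp: mem_MT_transient_iff algebra_simps)
  with \<open>0 < pmf \<nu> (xm, ym)\<close> have \<theta>: "\<theta> = - (real N * real ym)"
    by simp
  \<comment> \<open>At \<open>(0, 1)\<close> the equation reads \<open>2 N \<nu>(0, 2) = - N (ym - 1) \<nu>(0, 1) \<le> 0\<close>.\<close>
  have "MT_inflow N (pmf \<nu>) 0 1 = 2 * real N * pmf \<nu> (0, 2)"
    using N by (simp add: MT_inflow_def mem_MT_space_iff numeral_2_eq_2)
  then have "2 * (real N * pmf \<nu> (0, 2)) = - (real N * (real ym - 1) * pmf \<nu> (0, 1))"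
    using eigen_xy[of 0 1] zero_one_MT_transient[OF N] unfolding \<theta> by (simp add: algebra_simps)
  moreover have "0 \<le> real N * (real ym - 1) * pmf \<nu> (0, 1)"
    using \<open>1 \<le> ym\<close> by simp
  ultimately have "real N * pmf \<nu> (0, 2) \<le> 0"
    by linarith
  then show ?thesis
    using N pmf_nonneg[of \<nu> "(0, 2)"] by (simp add: mult_le_0_iff)
qed

lemma MT_eigen_support:
  assumes N: "1 \<le> N" and supp: "set_pmf \<nu> \<subseteq> MT_transient N"
    and eigen: "\<And>s. s \<in> MT_transient N \<Longrightarrow>
      (\<Sum>w\<in>MT_space N. pmf \<nu> w * MT_gen N w s) = \<theta> * pmf \<nu> s"
  shows "set_pmf \<nu> \<subseteq> {(0, 1)}"
proof
  have zero_backward: "pmf \<nu> w = 0" if "(MT_step N)\<^sup>*\<^sup>* w (0, 2)" for w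
    using that
  proof (induction rule: converse_rtranclp_induct)
    case (step w s)
    then have "(\<Sum>v\<in>MT_space N. pmf \<nu> v * MT_gen N v s) = 0"
      using eigen[of s] by (simp add: MT_step_def)
    then show ?case
      by (rule MT_step_zero_backward[where f = "pmf \<nu>", OF step(1) pmf_nonneg step(3)])
  qed (rule MT_eigen_zero_at_zero_two[OF N supp eigen])
  fix s assume s: "s \<in> set_pmf \<nu>"
  obtain x y where xy: "s = (x, y)" by (cases s)
  have S: "(x, y) \<in> MT_transient N"
    using s supp xy by auto
  show "s \<in> {(0, 1)}"
  proof (rule ccontr)
    assume "s \<notin> {(0, 1)}"
    with S xy have "2 \<le> x + y" "(0, x + y) \<in> MT_transient N"
      unfolding mem_MT_transient_iff by auto
    then have "(MT_step N)\<^sup>*\<^sup>* (0, x + y) (0, 2)"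
      using N by (intro MT_reaches_fewer_spreaders) auto
    with MT_reaches_no_ignorants[OF S] have "(MT_step N)\<^sup>*\<^sup>* (x, y) (0, 2)"
      by (rule rtranclp_trans)
    then show False
      using zero_backward s xy by (simp add: set_pmf_iff)
  qed
qed

lemma MT_QSD_unique:
  assumes N: "1 \<le> N" and qsd: "MT_QSD N \<nu>"
  shows "\<nu> = return_pmf (0, 1)"
proof -
  obtain \<theta> where "\<And>s. s \<in> MT_transient N \<Longrightarrow>
      (\<Sum>w\<in>MT_space N. pmf \<nu> w * MT_gen N w s) = \<theta> * pmf \<nu> s"
    using MT_QSD_eigen[OF qsd] by blast
  moreover have "set_pmf \<nu> \<subseteq> MT_transient N"
    using qsd unfolding MT_QSD_def by blast
  ultimately have "set_pmf \<nu> \<subseteq> {(0, 1)}"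
    by (rule MT_eigen_support[OF N, rotated])
  then show ?thesis
    by (simp add: set_pmf_subset_singleton)
qed

section \<open>The Yaglom limit\<close>

lemma MT_scaled_one_spreader_mono:
  assumes "(x, 1) \<in> MT_space N" "0 \<le> s" "s \<le> t"
  shows "MT_scaled N \<mu> s (x, 1) \<le> MT_scaled N \<mu> t (x, 1)"
proof (rule DERIV_nonneg_imp_nondecreasing[OF assms(3)])
  fix \<tau> assume "s \<le> \<tau>"
  then have "0 \<le> MT_inflow N (MT_scaled N \<mu> \<tau>) x 1"
    using assms(1,2) by (intro MT_inflow_nonneg MT_scaled_nonneg) auto
  with MT_scaled_deriv[OF assms(1), of \<mu> \<tau>]
  show "\<exists>d. ((\<lambda>t. MT_scaled N \<mu> t (x, 1)) has_real_derivative d) (at \<tau>) \<and> 0 \<le> d"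
    by auto
qed

lemma MT_scaled_two_spreaders_lower:
  assumes N: "1 \<le> N" and S: "(x + 1, 1) \<in> MT_transient N" and "0 \<le> t"
  shows "MT_scaled N \<mu> t (x + 1, 1) \<le> 2 * real N * MT_scaled N \<mu> (t + 1) (x, 2)"
proof -
  define m where "m = MT_scaled N \<mu> t (x + 1, 1)"
  \<comment> \<open>\<open>g\<close> solves \<open>g' + N g = m\<close>, and the inflow into \<open>(x, 2)\<close> stays above \<open>m\<close> after time \<open>t\<close>
    because the scaled mass at \<open>(x + 1, 1)\<close> is nondecreasing.\<close>
  define g where "g \<tau> = m / real N * (1 - exp (- (real N * (\<tau> - t))))" for \<tau>
  have space: "(x, 2) \<in> MT_space N" "(x + 1, 1) \<in> MT_space N"
    using S by (auto simp: mem_MT_transient_iff mem_MT_space_iff)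
  have "g (t + 1) \<le> MT_scaled N \<mu> (t + 1) (x, 2)"
  proof (rule MT_scaled_ge_if_subsolution[OF space(1), where T = t])
    show "(g has_real_derivative m * exp (- (real N * (\<tau> - t)))) (at \<tau>)" for \<tau>
      unfolding g_def using N by (auto intro!: derivative_eq_intros)
    fix \<tau> assume "t \<le> \<tau>"
    have "m \<le> MT_scaled N \<mu> \<tau> (x + 1, 1)"
      unfolding m_def using space(2) \<open>0 \<le> t\<close> \<open>t \<le> \<tau>\<close> by (rule MT_scaled_one_spreader_mono)
    also have "\<dots> \<le> real (x + 1) * MT_scaled N \<mu> \<tau> (x + 1, 1)"
      using MT_scaled_nonneg[OF space(2), of \<tau> \<mu>] \<open>0 \<le> t\<close> \<open>t \<le> \<tau>\<close>
      by (simp add: mult_le_cancel_right1)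
    also have "\<dots> \<le> MT_inflow N (MT_scaled N \<mu> \<tau>) x 2"
      using space MT_scaled_nonneg[of "(x, 3)" N \<tau> \<mu>] \<open>0 \<le> t\<close> \<open>t \<le> \<tau>\<close>
      by (simp add: MT_inflow_def mem_MT_space_iff)
    finally show "m * exp (- (real N * (\<tau> - t))) + real N * (real 2 - 1) * g \<tau>
        \<le> MT_inflow N (MT_scaled N \<mu> \<tau>) x 2"
      unfolding g_def using N by (simp add: field_simps)
  qed (use MT_scaled_nonneg[OF space(1)] \<open>0 \<le> t\<close> in \<open>simp_all add: g_def\<close>)
  moreover have "m / (2 * real N) \<le> g (t + 1)"
  proof -
    have "1 / 2 \<le> 1 - exp (- real N)"
      using exp_neg_le_half[of "real N"] N by simp
    moreover have "0 \<le> m / real N"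
      unfolding m_def using MT_scaled_nonneg[OF space(2)] \<open>0 \<le> t\<close> by simp
    ultimately have "m / real N * (1 / 2) \<le> m / real N * (1 - exp (- real N))"
      by (rule mult_left_mono)
    then show ?thesis
      by (simp add: g_def)
  qed
  ultimately have "m / (2 * real N) \<le> MT_scaled N \<mu> (t + 1) (x, 2)"
    by linarith
  then show ?thesis
    unfolding m_def using N by (simp add: pos_divide_le_eq mult.commute)
qed

lemma MT_scaled_lower_step:
  assumes N: "1 \<le> N" and S: "(x + 1, 1) \<in> MT_transient N" and "0 \<le> T"
    and lower: "\<And>t. T \<le> t \<Longrightarrow> \<beta> * (t - T) ^ k \<le> MT_scaled N \<mu> t (x + 1, 1)"
    and "T + 1 \<le> t"
  shows "\<beta> / (real N * real (Suc k)) * (t - (T + 1)) ^ Suc k \<le> MT_scaled N \<mu> t (x, 1)"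
proof (rule MT_scaled_ge_if_subsolution[where T = "T + 1"])
  have "x < N"
    using S by (simp add: mem_MT_transient_iff)
  then show space: "(x, 1) \<in> MT_space N"
    by (simp add: mem_MT_space_iff)
  show "((\<lambda>\<tau>. \<beta> / (real N * real (Suc k)) * (\<tau> - (T + 1)) ^ Suc k) has_real_derivative
      \<beta> / (real N * real (Suc k)) * (real (Suc k) * (\<tau> - (T + 1)) ^ k)) (at \<tau>)" for \<tau>
    using DERIV_chain2[OF DERIV_pow[of "Suc k"] DERIV_diff[OF DERIV_ident DERIV_const[of "T + 1"]]]
    by (intro DERIV_cmult) simp
  fix \<tau> assume "T + 1 \<le> \<tau>"
  then have "\<beta> * (\<tau> - (T + 1)) ^ k \<le> MT_scaled N \<mu> (\<tau> - 1) (x + 1, 1)"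
    using lower[of "\<tau> - 1"] by (simp add: algebra_simps)
  also have "\<dots> \<le> 2 * real N * MT_scaled N \<mu> \<tau> (x, 2)"
    using MT_scaled_two_spreaders_lower[OF N S, of "\<tau> - 1" \<mu>] \<open>0 \<le> T\<close> \<open>T + 1 \<le> \<tau>\<close> by simp
  also have "\<dots> \<le> real N * (2 * (real N - real x) * MT_scaled N \<mu> \<tau> (x, 2))"
    using \<open>x < N\<close> MT_scaled_nonneg[of "(x, 2)" N \<tau> \<mu>] \<open>0 \<le> T\<close> \<open>T + 1 \<le> \<tau>\<close>
    by (simp add: mem_MT_space_iff mult_left_mono mult_right_mono)
  also have "\<dots> = real N * MT_inflow N (MT_scaled N \<mu> \<tau>) x 1"
    using \<open>x < N\<close> by (simp add: MT_inflow_def mem_MT_space_iff numeral_2_eq_2)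
  finally have "\<beta> * (\<tau> - (T + 1)) ^ k / real N \<le> MT_inflow N (MT_scaled N \<mu> \<tau>) x 1"
    using N by (simp add: pos_divide_le_eq mult.commute)
  moreover have "\<beta> / (real N * real (Suc k)) * (real (Suc k) * (\<tau> - (T + 1)) ^ k)
      = \<beta> * (\<tau> - (T + 1)) ^ k / real N"
    by (simp del: of_nat_Suc)
  ultimately show "\<beta> / (real N * real (Suc k)) * (real (Suc k) * (\<tau> - (T + 1)) ^ k)
      + real N * (real 1 - 1) * (\<beta> / (real N * real (Suc k)) * (\<tau> - (T + 1)) ^ Suc k)
      \<le> MT_inflow N (MT_scaled N \<mu> \<tau>) x 1"
    by simp
qed (use MT_scaled_nonneg assms in \<open>auto simp: mem_MT_transient_iff mem_MT_space_iff\<close>)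

lemma MT_dist_vanishing_backward:
  assumes "(MT_step N)\<^sup>*\<^sup>* w s" "\<forall>t>0. MT_dist N \<mu> t s = 0"
  shows "\<forall>t>0. MT_dist N \<mu> t w = 0"
  using assms
proof (induction rule: converse_rtranclp_induct)
  case (step w v)
  show ?case
  proof (intro allI impI)
    fix t :: real assume "0 < t"
    have inflow: "(\<Sum>u\<in>MT_space N. MT_dist N \<mu> t u * MT_gen N u v) = 0"
      using MT_dist_deriv \<open>0 < t\<close> by (rule DERIV_local_const) (use step.IH step.prems in auto)
    show "MT_dist N \<mu> t w = 0"
      using step.IH step.prems \<open>0 < t\<close>
      by (intro MT_step_zero_backward[OF step.hyps(1) _ _ inflow]) (auto intro: MT_dist_nonneg)
  qed
qed

lemma MT_dist_one_spreader_pos: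
  assumes supp: "set_pmf \<mu> \<subseteq> MT_transient N" and a: "(a, y0) \<in> set_pmf \<mu>"
  obtains T where "0 < T" "0 < MT_dist N \<mu> T (a, 1)"
proof -
  have S: "(a, y0) \<in> MT_transient N"
    using supp a by blast
  \<comment> \<open>Otherwise the mass would also vanish for \<open>t > 0\<close> at \<open>(a, y0)\<close>, which leads to \<open>(a, 1)\<close>,
    contradicting continuity at \<open>t = 0\<close>.\<close>
  have "\<exists>T>0. MT_dist N \<mu> T (a, 1) \<noteq> 0"
  proof (rule ccontr)
    assume "\<not> ?thesis"
    moreover have "(MT_step N)\<^sup>*\<^sup>* (a, y0) (a, 1)"
    proof (cases "a < N")
      case True
      then show ?thesis
        using S by (intro MT_reaches_fewer_spreaders) (auto simp: mem_MT_transient_iff)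
    next
      case False
      then have "y0 = 1"
        using S by (simp add: mem_MT_transient_iff)
      then show ?thesis by simp
    qed
    ultimately have "\<forall>t>0. MT_dist N \<mu> t (a, y0) = 0"
      using MT_dist_vanishing_backward by blast
    then have "((\<lambda>t. MT_dist N \<mu> t (a, y0)) \<longlongrightarrow> 0) (at_right 0)"
      using eventually_at_right_less by (force intro: tendsto_eventually elim: eventually_mono)
    moreover have "((\<lambda>t. MT_dist N \<mu> t (a, y0)) \<longlongrightarrow> MT_dist N \<mu> 0 (a, y0)) (at_right 0)"
      using DERIV_isCont[OF MT_dist_deriv] unfolding isCont_def
      by (rule filterlim_at_split[THEN iffD1, THEN conjunct2])
    ultimately have "MT_dist N \<mu> 0 (a, y0) = 0"
      using tendsto_unique trivial_limit_at_right_real by blast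
    then show False
      using S a MT_transient_subset[of N] by (auto simp: MT_dist_0 set_pmf_iff)
  qed
  then show ?thesis
    using that MT_dist_nonneg S MT_transient_subset
    by (auto simp: mem_MT_transient_iff mem_MT_space_iff order_le_neq_trans)
qed

lemma MT_scaled_lower_bound:
  assumes N: "1 \<le> N" and supp: "set_pmf \<mu> \<subseteq> MT_transient N" and a: "(a, y0) \<in> set_pmf \<mu>"
  obtains T \<beta> where "0 \<le> T" "0 < \<beta>" "\<And>t. T \<le> t \<Longrightarrow> \<beta> * (t - T) ^ a \<le> MT_scaled N \<mu> t (0, 1)"
proof -
  have "a \<le> N"
    using supp a by (auto simp: mem_MT_transient_iff)
  have "\<exists>T \<beta>. 0 \<le> T \<and> 0 < \<beta> \<and> (\<forall>t\<ge>T. \<beta> * (t - T) ^ j \<le> MT_scaled N \<mu> t (a - j, 1))"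
    if "j \<le> a" for j
    using that
  proof (induction j)
    case 0
    obtain T where T: "0 < T" "0 < MT_dist N \<mu> T (a, 1)"
      using MT_dist_one_spreader_pos[OF supp a] .
    have "(a, 1) \<in> MT_space N"
      using \<open>a \<le> N\<close> by (simp add: mem_MT_space_iff)
    then show ?case
      using T MT_scaled_one_spreader_mono
      by (intro exI[of _ T] exI[of _ "MT_scaled N \<mu> T (a, 1)"]) (auto simp: MT_scaled_def)
  next
    case (Suc j)
    then obtain T \<beta> where "0 \<le> T" "0 < \<beta>" "\<And>t. T \<le> t \<Longrightarrow> \<beta> * (t - T) ^ j \<le> MT_scaled N \<mu> t (a - Suc j + 1, 1)"
      by (auto simp: Suc_diff_Suc)
    moreover have "(a - Suc j + 1, 1) \<in> MT_transient N"
      using \<open>a \<le> N\<close> Suc.prems by (simp add: mem_MT_transient_iff)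
    ultimately show ?case
      using MT_scaled_lower_step[OF N] N
      by (intro exI[of _ "T + 1"] exI[of _ "\<beta> / (real N * real (Suc j))"]) auto
  qed
  from this[OF order_refl] obtain T \<beta> where
    "0 \<le> T" "0 < \<beta>" "\<forall>t\<ge>T. \<beta> * (t - T) ^ a \<le> MT_scaled N \<mu> t (a - a, 1)"
    by blast
  then show ?thesis
    using that by simp
qed

(* Exponent of the polynomial bound on MT_scaled at s when the initial law has at most a ignorants.
   A one-spreader state integrates its inflow and gains a power of t; the offsets 1/2 keep the bound
   decaying at the states (a, y) with y \<ge> 2, which is what is needed when a = 0. *)
definition MT_growth :: "nat \<Rightarrow> state \<Rightarrow> real" where
  "MT_growth a s = real a - real (fst s) + (if snd s = 1 then 1 / 2 else - 1 / 2)"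

lemma MT_growth_le:
  assumes "(x, y) \<in> MT_transient N" "x \<le> x'" "MT_level (x, y) < MT_level (x', y')"
  shows "MT_growth a (x', y') \<le> real a - real x - 1 / 2"
proof -
  have "x' = x \<and> y' \<noteq> 1 \<or> x + 1 \<le> x'"
    using assms by (auto simp: MT_level_def mem_MT_transient_iff)
  then show ?thesis
    unfolding MT_growth_def by (auto dest: of_nat_mono[where 'a = real])
qed

lemma MT_scaled_upper_step:
  assumes N: "1 \<le> N" and S: "(x, y) \<in> MT_transient N" and "x \<le> a" and "0 \<le> B" and "0 \<le> t"
    and pred: "\<And>p \<tau>. p \<in> MT_transient N \<Longrightarrow> MT_level (x, y) < MT_level p \<Longrightarrow> x \<le> fst p \<Longrightarrow> 0 \<le> \<tau> \<Longrightarrow>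
      MT_scaled N \<mu> \<tau> p \<le> B * (1 + \<tau>) powr (real a - real x - 1 / 2)"
  shows "MT_scaled N \<mu> t (x, y) \<le> (pmf \<mu> (x, y) + 4 * (real N + 2)^2 * B) * (1 + t) powr MT_growth a (x, y)"
proof (rule MT_scaled_le_if_supersolution[OF _ \<open>0 \<le> t\<close>])
  define q where "q = real a - real x - 1 / 2"
  define r where "r = MT_growth a (x, y)"
  define C where "C = pmf \<mu> (x, y) + 4 * (real N + 2)^2 * B"
  show space: "(x, y) \<in> MT_space N"
    using S MT_transient_subset by blast
  show "((\<lambda>\<tau>. C * (1 + \<tau>) powr r) has_real_derivative C * (r * (1 + \<tau>) powr (r - 1))) (at \<tau>)"
    if "0 \<le> \<tau>" for \<tau>
    using DERIV_fun_powr[OF DERIV_add[OF DERIV_const[of 1] DERIV_ident], of \<tau> r] that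
    by (intro DERIV_cmult) simp
  show "MT_scaled N \<mu> 0 (x, y) \<le> C * (1 + 0) powr r"
    using space \<open>0 \<le> B\<close> by (simp add: MT_scaled_0 C_def)
  fix \<tau> :: real assume "0 \<le> \<tau>"
  have "MT_inflow N (MT_scaled N \<mu> \<tau>) x y \<le> 2 * (real N + 2)^2 * (B * (1 + \<tau>) powr q)"
    using space \<open>0 \<le> B\<close> \<open>0 \<le> \<tau>\<close> S unfolding q_def
    by (intro MT_inflow_le pred) (auto simp: MT_level_def mem_MT_transient_iff mem_MT_space_iff)
  also have "\<dots> = (2 * (real N + 2)^2 * B) * (1 + \<tau>) powr q"
    by (simp only: mult.assoc)
  also have "\<dots> \<le> C / 2 * (1 + \<tau>) powr q"
    unfolding C_def by (intro mult_right_mono) auto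
  also have "\<dots> \<le> C * (r * (1 + \<tau>) powr (r - 1)) + real N * (real y - 1) * (C * (1 + \<tau>) powr r)"
  proof (rule powr_supersolution)
    have "1 * 1 \<le> real N * (real y - 1)" if "2 \<le> y"
      using N that by (intro mult_mono) auto
    then show "r = q + 1 \<and> real N * (real y - 1) = 0 \<or> r = q \<and> 1 \<le> real N * (real y - 1)"
      using S by (auto simp: r_def q_def MT_growth_def mem_MT_transient_iff)
  qed (use \<open>0 \<le> \<tau>\<close> \<open>0 \<le> B\<close> \<open>x \<le> a\<close> in \<open>auto simp: C_def q_def\<close>)
  finally show "MT_inflow N (MT_scaled N \<mu> \<tau>) x y
      \<le> C * (r * (1 + \<tau>) powr (r - 1)) + real N * (real y - 1) * (C * (1 + \<tau>) powr r)" .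
qed

definition MT_dominated :: "nat \<Rightarrow> state pmf \<Rightarrow> state \<Rightarrow> real \<Rightarrow> bool" where
  "MT_dominated N \<mu> s e \<longleftrightarrow> (\<exists>C\<ge>0. \<forall>t\<ge>0. MT_scaled N \<mu> t s \<le> C * (1 + t) powr e)"

lemma MT_dominated_mono:
  assumes "MT_dominated N \<mu> s e" "e \<le> e'"
  shows "MT_dominated N \<mu> s e'"
proof -
  obtain C where "0 \<le> C" and C: "\<And>t. 0 \<le> t \<Longrightarrow> MT_scaled N \<mu> t s \<le> C * (1 + t) powr e"
    using assms(1) unfolding MT_dominated_def by blast
  have "C * (1 + t) powr e \<le> C * (1 + t) powr e'" if "0 \<le> t" for t
    using \<open>0 \<le> C\<close> assms(2) that by (intro mult_left_mono powr_mono) auto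
  with \<open>0 \<le> C\<close> C show ?thesis
    unfolding MT_dominated_def by (meson order_trans)
qed

lemma MT_dominated_step:
  assumes N: "1 \<le> N" and S: "(x, y) \<in> MT_transient N" and "x \<le> a"
    and pred: "\<And>p. p \<in> MT_transient N \<Longrightarrow> MT_level (x, y) < MT_level p \<Longrightarrow> x \<le> fst p \<Longrightarrow>
      MT_dominated N \<mu> p (real a - real x - 1 / 2)"
  shows "MT_dominated N \<mu> (x, y) (MT_growth a (x, y))"
proof -
  define P where "P = {p \<in> MT_transient N. MT_level (x, y) < MT_level p \<and> x \<le> fst p}"
  have fin: "finite P"
    unfolding P_def using finite_MT_transient by simp
  have nonneg: "0 \<le> (1 + t) powr (real a - real x - 1 / 2)" if "0 \<le> t" for t :: real
    by simp
  have each: "\<exists>C\<ge>0. \<forall>t\<ge>0. MT_scaled N \<mu> t p \<le> C * (1 + t) powr (real a - real x - 1 / 2)"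
    if "p \<in> P" for p
    using pred that unfolding P_def MT_dominated_def by blast
  obtain B where "0 \<le> B" and B: "\<And>p t. p \<in> P \<Longrightarrow> 0 \<le> t \<Longrightarrow>
      MT_scaled N \<mu> t p \<le> B * (1 + t) powr (real a - real x - 1 / 2)"
    using finite_uniform_bound[where f = "\<lambda>p t. MT_scaled N \<mu> t p", OF fin nonneg each] by blast
  have "MT_scaled N \<mu> t (x, y)
      \<le> (pmf \<mu> (x, y) + 4 * (real N + 2)^2 * B) * (1 + t) powr MT_growth a (x, y)" if "0 \<le> t" for t
    using N S \<open>x \<le> a\<close> \<open>0 \<le> B\<close> that by (rule MT_scaled_upper_step) (use B in \<open>auto simp: P_def\<close>)
  moreover have "0 \<le> pmf \<mu> (x, y) + 4 * (real N + 2)^2 * B"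
    using \<open>0 \<le> B\<close> by simp
  ultimately show ?thesis
    unfolding MT_dominated_def by blast
qed

lemma MT_dominated_growth:
  assumes N: "1 \<le> N" and bound: "\<And>u. u \<in> set_pmf \<mu> \<Longrightarrow> fst u \<le> a" and S: "s \<in> MT_transient N"
  shows "MT_dominated N \<mu> s (MT_growth a s)"
proof -
  have "s \<in> MT_transient N \<longrightarrow> MT_dominated N \<mu> s (MT_growth a s)"
    using subsetD[OF MT_transient_subset S]
  proof (induction rule: MT_level_induct)
    case (step s)
    obtain x y where s: "s = (x, y)" by (cases s)
    show ?case
    proof
      assume S: "s \<in> MT_transient N"
      show "MT_dominated N \<mu> s (MT_growth a s)"
      proof (cases "a < x")
        case True
        then have "MT_dist N \<mu> t s = 0" for t
          using bound s by (intro MT_dist_eq_0_if_fst_less) force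
        then show ?thesis
          unfolding MT_dominated_def by (auto simp: MT_scaled_def)
      next
        case False
        have "MT_dominated N \<mu> p (real a - real x - 1 / 2)"
          if "p \<in> MT_transient N" "MT_level s < MT_level p" "x \<le> fst p" for p
        proof (rule MT_dominated_mono)
          show "MT_dominated N \<mu> p (MT_growth a p)"
            using step.IH that MT_transient_subset by blast
          show "MT_growth a p \<le> real a - real x - 1 / 2"
            using that S unfolding s by (cases p) (auto intro: MT_growth_le)
        qed
        then show ?thesis
          unfolding s using N S s False by (intro MT_dominated_step) auto
      qed
    qed
  qed
  then show ?thesis
    using S by blast
qed

lemma MT_scaled_zero_one_grows:
  assumes N: "1 \<le> N" and supp: "set_pmf \<mu> \<subseteq> MT_transient N"
  obtains a \<beta> T where "\<And>u. u \<in> set_pmf \<mu> \<Longrightarrow> fst u \<le> a" "0 < \<beta>"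
    "\<And>t. T \<le> t \<Longrightarrow> \<beta> * (1 + t) powr real a \<le> MT_scaled N \<mu> t (0, 1)"
proof -
  define a where "a = Max (fst ` set_pmf \<mu>)"
  have "finite (set_pmf \<mu>)"
    using supp finite_MT_transient finite_subset by blast
  then have bound: "fst u \<le> a" if "u \<in> set_pmf \<mu>" for u
    using that unfolding a_def by simp
  have "a \<in> fst ` set_pmf \<mu>"
    unfolding a_def using \<open>finite (set_pmf \<mu>)\<close> set_pmf_not_empty[of \<mu>] by (intro Max_in) auto
  then obtain y0 where "(a, y0) \<in> set_pmf \<mu>"
    by force
  then obtain T \<beta> where "0 \<le> T" "0 < \<beta>" and lower: "\<And>t. T \<le> t \<Longrightarrow> \<beta> * (t - T) ^ a \<le> MT_scaled N \<mu> t (0, 1)"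
    using MT_scaled_lower_bound[OF N supp] by blast
  have "\<beta> / 2 ^ a * (1 + t) powr real a \<le> MT_scaled N \<mu> t (0, 1)" if "2 * T + 1 \<le> t" for t
  proof -
    have "\<beta> / 2 ^ a * (1 + t) powr real a \<le> \<beta> / 2 ^ a * (2 ^ a * (t - T) ^ a)"
      using powr_le_shifted_power[OF \<open>0 \<le> T\<close> that] \<open>0 < \<beta>\<close> by (intro mult_left_mono) auto
    also have "\<dots> = \<beta> * (t - T) ^ a"
      by simp
    also have "\<dots> \<le> MT_scaled N \<mu> t (0, 1)"
      using \<open>0 \<le> T\<close> that by (intro lower) auto
    finally show ?thesis .
  qed
  moreover have "0 < \<beta> / 2 ^ a"
    using \<open>0 < \<beta>\<close> by simp
  ultimately show ?thesis
    using that bound by blast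
qed

lemma MT_dist_zero_one_eventually_pos:
  assumes N: "1 \<le> N" and supp: "set_pmf \<mu> \<subseteq> MT_transient N"
  shows "\<forall>\<^sub>F t in at_top. 0 < MT_dist N \<mu> t (0, 1)"
proof -
  obtain a \<beta> T where "\<And>u. u \<in> set_pmf \<mu> \<Longrightarrow> fst u \<le> a" "0 < \<beta>"
    and lower: "\<And>t. T \<le> t \<Longrightarrow> \<beta> * (1 + t) powr real a \<le> MT_scaled N \<mu> t (0, 1)"
    using MT_scaled_zero_one_grows[OF N supp] by blast
  show ?thesis
    using eventually_ge_at_top[of "max 0 T"]
  proof eventually_elim
    case (elim t)
    then have "0 < \<beta> * (1 + t) powr real a"
      using \<open>0 < \<beta>\<close> by simp
    also have "\<dots> \<le> MT_scaled N \<mu> t (0, 1)"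
      using elim by (intro lower) simp
    finally show ?case
      by (simp add: MT_scaled_def zero_less_mult_iff)
  qed
qed

lemma MT_dist_ratio_le:
  assumes N: "1 \<le> N" and supp: "set_pmf \<mu> \<subseteq> MT_transient N"
    and S: "s \<in> MT_transient N" and "s \<noteq> (0, 1)"
  obtains K where "\<forall>\<^sub>F t in at_top. MT_dist N \<mu> t s / MT_dist N \<mu> t (0, 1) \<le> K * (1 + t) powr (- 1 / 2)"
proof -
  obtain a \<beta> T where bound: "\<And>u. u \<in> set_pmf \<mu> \<Longrightarrow> fst u \<le> a" and "0 < \<beta>"
    and lower: "\<And>t. T \<le> t \<Longrightarrow> \<beta> * (1 + t) powr real a \<le> MT_scaled N \<mu> t (0, 1)"
    using MT_scaled_zero_one_grows[OF N supp] by blast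
  obtain C where "0 \<le> C" and upper: "\<And>t. 0 \<le> t \<Longrightarrow> MT_scaled N \<mu> t s \<le> C * (1 + t) powr MT_growth a s"
    using MT_dominated_growth[OF N bound S] unfolding MT_dominated_def by blast
  obtain x y where s: "s = (x, y)"
    by (cases s)
  with S \<open>s \<noteq> (0, 1)\<close> have "y = 1 \<longrightarrow> 1 \<le> x"
    by (auto simp: mem_MT_transient_iff)
  then have "MT_growth a s \<le> real a - 1 / 2"
    unfolding s MT_growth_def by auto
  have ratio: "MT_dist N \<mu> t s / MT_dist N \<mu> t (0, 1) \<le> C / \<beta> * (1 + t) powr (- 1 / 2)"
    if "0 \<le> t" "T \<le> t" for t
  proof -
    have "MT_dist N \<mu> t s / MT_dist N \<mu> t (0, 1) = MT_scaled N \<mu> t s / MT_scaled N \<mu> t (0, 1)"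
      unfolding MT_scaled_def by (rule mult_divide_mult_cancel_left[symmetric]) simp
    also have "\<dots> \<le> C * (1 + t) powr MT_growth a s / (\<beta> * (1 + t) powr real a)"
    proof (rule frac_le)
      show "0 < \<beta> * (1 + t) powr real a"
        using \<open>0 < \<beta>\<close> \<open>0 \<le> t\<close> by simp
      show "0 \<le> C * (1 + t) powr MT_growth a s"
        using \<open>0 \<le> C\<close> by simp
    qed (fact upper[OF \<open>0 \<le> t\<close>] lower[OF \<open>T \<le> t\<close>])+
    also have "\<dots> = C / \<beta> * (1 + t) powr (MT_growth a s - real a)"
      using \<open>0 \<le> t\<close> by (simp add: powr_diff)
    also have "\<dots> \<le> C / \<beta> * (1 + t) powr (- 1 / 2)"
      using \<open>MT_growth a s \<le> real a - 1 / 2\<close> \<open>0 \<le> t\<close> \<open>0 \<le> C\<close> \<open>0 < \<beta>\<close>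
      by (intro mult_left_mono powr_mono) simp_all
    finally show ?thesis .
  qed
  have "\<forall>\<^sub>F t in at_top. MT_dist N \<mu> t s / MT_dist N \<mu> t (0, 1) \<le> C / \<beta> * (1 + t) powr (- 1 / 2)"
    using eventually_ge_at_top[of "max 0 T"] by eventually_elim (rule ratio; simp)
  then show ?thesis
    by (rule that)
qed

lemma MT_dist_ratio_tendsto_0:
  assumes N: "1 \<le> N" and supp: "set_pmf \<mu> \<subseteq> MT_transient N"
    and S: "s \<in> MT_transient N" and "s \<noteq> (0, 1)"
  shows "((\<lambda>t. MT_dist N \<mu> t s / MT_dist N \<mu> t (0, 1)) \<longlongrightarrow> 0) at_top"
proof -
  obtain K where upper: "\<forall>\<^sub>F t in at_top. MT_dist N \<mu> t s / MT_dist N \<mu> t (0, 1) \<le> K * (1 + t) powr (- 1 / 2)"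
    using MT_dist_ratio_le[OF assms] by blast
  have space: "s \<in> MT_space N" "(0, 1) \<in> MT_space N"
    using S zero_one_MT_transient[OF N] MT_transient_subset by auto
  have lower: "\<forall>\<^sub>F t in at_top. 0 \<le> MT_dist N \<mu> t s / MT_dist N \<mu> t (0, 1)"
    using eventually_ge_at_top[of 0] by eventually_elim (use space in \<open>simp add: MT_dist_nonneg\<close>)
  have "filterlim (\<lambda>t::real. 1 + t) at_top at_top"
    by (rule filterlim_tendsto_add_at_top[OF tendsto_const filterlim_ident])
  then have "((\<lambda>t. (1 + t) powr (- 1 / 2 :: real)) \<longlongrightarrow> 0) at_top"
    by (intro tendsto_neg_powr) simp_all
  then have "((\<lambda>t. K * (1 + t) powr (- 1 / 2)) \<longlongrightarrow> 0) at_top"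
    by (rule tendsto_mult_right_zero)
  then show ?thesis
    by (rule tendsto_sandwich[OF lower upper tendsto_const])
qed

lemma MT_cond_tendsto:
  assumes N: "1 \<le> N" and supp: "set_pmf \<mu> \<subseteq> MT_transient N" and S: "s \<in> MT_transient N"
  shows "((\<lambda>t. MT_cond N \<mu> t {s}) \<longlongrightarrow> pmf (return_pmf (0, 1)) s) at_top"
proof -
  have "((\<lambda>t. MT_dist N \<mu> t s / (\<Sum>s'\<in>MT_transient N. MT_dist N \<mu> t s'))
      \<longlongrightarrow> (if s = (0, 1) then 1 else 0)) at_top"
    using MT_dist_zero_one_eventually_pos[OF N supp] finite_MT_transient zero_one_MT_transient[OF N] S
    by (intro tendsto_share_of_dominant[where f = "\<lambda>s t. MT_dist N \<mu> t s"] MT_dist_ratio_tendsto_0[OF N supp])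
       (auto elim: eventually_mono)
  then show ?thesis
    unfolding MT_cond_def MT_surv_def by (cases "s = (0, 1)") auto
qed

theorem mainTheorem1:
  fixes N :: nat
  assumes "N \<ge> 1"
  shows "(\<exists>!\<nu>. MT_QSD N \<nu>) \<and> MT_QSD N (return_pmf (0, 1)) \<and>
    (\<forall>\<mu>. set_pmf \<mu> \<subseteq> MT_transient N \<longrightarrow>
       (\<forall>s\<in>MT_transient N.
          ((\<lambda>t. MT_cond N \<mu> t {s}) \<longlongrightarrow> pmf (return_pmf (0, 1)) s) at_top))"
  using MT_QSD_return_zero_one[OF assms] MT_QSD_unique[OF assms] MT_cond_tendsto[OF assms] by blast

end
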